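(* If the moment matrix admits the Gauss–Borel factorization $g=S^{-1}\bar S$, then $S\Upsilon_1S^{-1}=\bar S\Upsilon_2^\top\bar S^{-1}$.
   Context: $g=(g_{i,j})_{i,j\ge0}$ with $g_{i,j}=\int x^{k_1(i)+k_2(j)}w_{1,a_1(i)}(x)w_{2,a_2(j)}(x)d\mu(x)$, where $\mu$ is a finite Borel measure on an interval, $w_{1,a}$ ($a\le p_1$), $w_{2,b}$ ($b\le p_2$) are weights with finite moments, and for compositions $\vec n_\ell\in\mathbb N^{p_\ell}$ each $i\in\mathbb Z_+$ is uniquely $i=q|\vec n_\ell|+n_{\ell,1}+\dots+n_{\ell,a-1}+r$, $0\le r<n_{\ell,a}$, $a_\ell(i)=a$, $k_\ell(i)=qn_{\ell,a}+r$. Gauss–Borel factorization: $S$ semi-infinite lower triangular with unit diagonal, $\bar S$ semi-infinite upper triangular with nonzero diagonal. $e_{\ell,a}(k)=e_i$ for the unique $i$ with $a_\ell(i)=a,k_\ell(i)=k$; $\Lambda_{\ell,a}=\sum_ke_{\ell,a}(k)e_{\ell,a}(k+1)^\top$; $\Upsilon_\ell=\sum_a\Lambda_{\ell,a}$. *)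

theory Defs
  imports "HOL-Analysis.Analysis"
begin

text \<open>Semi-infinite matrices are functions nat => nat => real (indices from 0).
  The product is the (unordered, infinite) sum over the middle index; in all
  products occurring below only finitely many terms are non-zero.\<close>

definition mmult :: "(nat \<Rightarrow> nat \<Rightarrow> real) \<Rightarrow> (nat \<Rightarrow> nat \<Rightarrow> real) \<Rightarrow> nat \<Rightarrow> nat \<Rightarrow> real" where
  "mmult A B i j = infsum (\<lambda>k. A i k * B k j) UNIV"

definition mtrans :: "(nat \<Rightarrow> nat \<Rightarrow> real) \<Rightarrow> nat \<Rightarrow> nat \<Rightarrow> real" where
  "mtrans A i j = A j i"

definition mid :: "nat \<Rightarrow> nat \<Rightarrow> real" where
  "mid i j = (if i = j then 1 else 0)"

definition lower_triangular :: "(nat \<Rightarrow> nat \<Rightarrow> real) \<Rightarrow> bool" where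
  "lower_triangular A \<longleftrightarrow> (\<forall>i j. i < j \<longrightarrow> A i j = 0)"

definition upper_triangular :: "(nat \<Rightarrow> nat \<Rightarrow> real) \<Rightarrow> bool" where
  "upper_triangular A \<longleftrightarrow> (\<forall>i j. j < i \<longrightarrow> A i j = 0)"

definition composition :: "nat list \<Rightarrow> bool" where
  "composition ns \<longleftrightarrow> ns \<noteq> [] \<and> (\<forall>x\<in>set ns. 0 < x)"

text \<open>For i, the unique (a,k) with i = q|n| + n_1 + ... + n_{a-1} + r, 0 <= r < n_a,
  k = q n_a + r (a is 0-based here).\<close>

definition ak_pair :: "nat list \<Rightarrow> nat \<Rightarrow> nat \<times> nat" where
  "ak_pair ns i = (THE (a, k). a < length ns \<and>
      (\<exists>q r. i = q * sum_list ns + sum_list (take a ns) + r \<and> r < ns ! a \<and> k = q * ns ! a + r))"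

definition aidx :: "nat list \<Rightarrow> nat \<Rightarrow> nat" where
  "aidx ns i = fst (ak_pair ns i)"

definition kidx :: "nat list \<Rightarrow> nat \<Rightarrow> nat" where
  "kidx ns i = snd (ak_pair ns i)"

text \<open>e_{a}(k) = e_i for the unique i with a(i) = a and k(i) = k; we record the index i.\<close>

definition eidx :: "nat list \<Rightarrow> nat \<Rightarrow> nat \<Rightarrow> nat" where
  "eidx ns a k = (THE i. aidx ns i = a \<and> kidx ns i = k)"

text \<open>Lambda_a = sum_k e_a(k) e_a(k+1)^T ; Upsilon = sum_a Lambda_a.\<close>

definition Lambda :: "nat list \<Rightarrow> nat \<Rightarrow> nat \<Rightarrow> nat \<Rightarrow> real" where
  "Lambda ns a i j = (if \<exists>k. i = eidx ns a k \<and> j = eidx ns a (Suc k) then 1 else 0)"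

definition Upsilon :: "nat list \<Rightarrow> nat \<Rightarrow> nat \<Rightarrow> real" where
  "Upsilon ns i j = (\<Sum>a<length ns. Lambda ns a i j)"

definition moment_matrix :: "real measure \<Rightarrow> (nat \<Rightarrow> real \<Rightarrow> real) \<Rightarrow> (nat \<Rightarrow> real \<Rightarrow> real)
    \<Rightarrow> nat list \<Rightarrow> nat list \<Rightarrow> nat \<Rightarrow> nat \<Rightarrow> real" where
  "moment_matrix \<mu> w1 w2 n1 n2 i j =
     (LINT x|\<mu>. x ^ (kidx n1 i + kidx n2 j) * w1 (aidx n1 i) x * w2 (aidx n2 j) x)"

end

theory Submission imports Defs begin

text \<open>Left multiplication by \<open>Upsilon\<^sub>1\<close> replaces a row index \<open>i\<close> by the next index
  of the same weight block, i.e. raises \<open>k\<^sub>1(i)\<close> by one; right multiplication by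
  \<open>Upsilon\<^sub>2\<^sup>T\<close> does the same to \<open>k\<^sub>2(j)\<close>. Either way the integrand of \<open>g\<^sub>i\<^sub>j\<close>
  acquires one more factor \<open>x\<close>, so \<open>Upsilon\<^sub>1 g = g Upsilon\<^sub>2\<^sup>T\<close>. Substituting
  \<open>g = S\<^sup>-\<^sup>1 Sbar\<close> and cancelling gives the claim. The semi-infinite products are
  associative here because every product involved has a row-finite left factor and a
  row-finite middle or column-finite right factor; triangular matrices and \<open>Upsilon\<close>
  provide exactly that.\<close>

definition block_start :: "nat list \<Rightarrow> nat \<Rightarrow> nat" where
  "block_start ns a = sum_list (take a ns)"

definition index_of :: "nat list \<Rightarrow> nat \<Rightarrow> nat \<Rightarrow> nat" where
  "index_of ns a k = (k div ns!a) * sum_list ns + block_start ns a + k mod ns!a"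

definition is_ak_pair :: "nat list \<Rightarrow> nat \<Rightarrow> nat \<Rightarrow> nat \<Rightarrow> bool" where
  "is_ak_pair ns i a k \<longleftrightarrow> a < length ns \<and>
     (\<exists>q r. i = q * sum_list ns + block_start ns a + r \<and> r < ns ! a \<and> k = q * ns ! a + r)"

lemma composition_pos: "composition ns \<Longrightarrow> a < length ns \<Longrightarrow> 0 < ns!a"
  unfolding composition_def by (simp add: nth_mem)

lemma block_start_Suc: "a < length ns \<Longrightarrow> block_start ns (Suc a) = block_start ns a + ns!a"
  unfolding block_start_def by (simp add: take_Suc_conv_app_nth)

lemma block_start_mono: "a \<le> b \<Longrightarrow> block_start ns a \<le> block_start ns b"
  unfolding block_start_def by (metis le_add_diff_inverse take_add sum_list_append le_add1)

lemma block_end_le_sum_list: "a < length ns \<Longrightarrow> block_start ns a + ns!a \<le> sum_list ns"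
  by (metis block_start_Suc block_start_def append_take_drop_id le_add1 sum_list_append)

lemma block_containing:
  "s < sum_list ns \<Longrightarrow> \<exists>a<length ns. block_start ns a \<le> s \<and> s < block_start ns a + ns!a"
proof (induction ns arbitrary: s)
  case (Cons x xs)
  show ?case
  proof (cases "s < x")
    case True
    then show ?thesis by (intro exI[of _ 0]) (simp add: block_start_def)
  next
    case False
    with Cons.prems have "s - x < sum_list xs" by simp
    then obtain a where "a < length xs"
      "block_start xs a \<le> s - x" "s - x < block_start xs a + xs!a"
      using Cons.IH by blast
    with False show ?thesis by (intro exI[of _ "Suc a"]) (auto simp: block_start_def)
  qed
qed simp

lemma block_unique:
  assumes "a < length ns" "a' < length ns" "r < ns!a" "r' < ns!a'"
    and "block_start ns a + r = block_start ns a' + r'"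
  shows "a = a'"
proof (rule linorder_cases[of a a'])
  assume "a < a'"
  then have "block_start ns (Suc a) \<le> block_start ns a'" by (intro block_start_mono) simp
  with assms show ?thesis using block_start_Suc[of a ns] by simp
next
  assume "a' < a"
  then have "block_start ns (Suc a') \<le> block_start ns a" by (intro block_start_mono) simp
  with assms show ?thesis using block_start_Suc[of a' ns] by simp
qed

lemma is_ak_pair_unique:
  assumes "is_ak_pair ns i a k" "is_ak_pair ns i a' k'"
  shows "a = a' \<and> k = k'"
proof -
  let ?N = "sum_list ns"
  obtain q r where a: "a < length ns" "r < ns!a"
    and i: "i = q * ?N + block_start ns a + r" and k: "k = q * ns!a + r"
    using assms(1) unfolding is_ak_pair_def by auto
  obtain q' r' where a': "a' < length ns" "r' < ns!a'"
    and i': "i = q' * ?N + block_start ns a' + r'" and k': "k' = q' * ns!a' + r'"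
    using assms(2) unfolding is_ak_pair_def by auto
  have lt: "block_start ns a + r < ?N" and lt': "block_start ns a' + r' < ?N"
    using a a' block_end_le_sum_list[of a ns] block_end_le_sum_list[of a' ns] by simp_all
  have divmod: "(p * N + s) div N = p \<and> (p * N + s) mod N = s" if "s < N" for p s N :: nat
    using that by simp
  have "i div ?N = q \<and> i mod ?N = block_start ns a + r"
    unfolding i add.assoc by (rule divmod[OF lt])
  moreover have "i div ?N = q' \<and> i mod ?N = block_start ns a' + r'"
    unfolding i' add.assoc by (rule divmod[OF lt'])
  ultimately have "q = q'" and "block_start ns a + r = block_start ns a' + r'" by simp_all
  moreover from this have "a = a'" using a a' block_unique by blast
  ultimately show ?thesis using k k' by simp
qed

lemma is_ak_pair_index_of:
  "composition ns \<Longrightarrow> a < length ns \<Longrightarrow> is_ak_pair ns (index_of ns a k) a k"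
  unfolding is_ak_pair_def index_of_def
  by (rule conjI, simp, rule exI[of _ "k div ns!a"], rule exI[of _ "k mod ns!a"])
    (simp add: composition_pos div_mult_mod_eq)

lemma index_of_is_ak_pair: "is_ak_pair ns i a k \<Longrightarrow> index_of ns a k = i"
  unfolding is_ak_pair_def index_of_def by auto

lemma is_ak_pair_exists:
  assumes "composition ns"
  shows "\<exists>a k. is_ak_pair ns i a k"
proof -
  let ?N = "sum_list ns"
  have "0 < ns!0" using assms composition_pos[of ns 0] unfolding composition_def by simp
  moreover have "ns!0 \<le> ?N"
    using assms elem_le_sum_list[of 0 ns] unfolding composition_def by simp
  ultimately have "0 < ?N" by linarith
  then obtain a where a: "a < length ns"
    "block_start ns a \<le> i mod ?N" "i mod ?N < block_start ns a + ns!a"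
    using block_containing[of "i mod ?N" ns] by auto
  let ?r = "i mod ?N - block_start ns a"
  have "i = (i div ?N) * ?N + block_start ns a + ?r" using a by simp
  with a have "is_ak_pair ns i a ((i div ?N) * ns!a + ?r)"
    unfolding is_ak_pair_def by (intro conjI exI[of _ "i div ?N"] exI[of _ ?r]) auto
  then show ?thesis by blast
qed

lemma ak_pair_eqI: "is_ak_pair ns i a k \<Longrightarrow> ak_pair ns i = (a, k)"
  unfolding ak_pair_def block_start_def[symmetric] is_ak_pair_def[symmetric]
  by (rule the_equality) (auto dest: is_ak_pair_unique)

lemma is_ak_pair_aidx_kidx: "composition ns \<Longrightarrow> is_ak_pair ns i (aidx ns i) (kidx ns i)"
  using is_ak_pair_exists ak_pair_eqI by (metis aidx_def kidx_def fst_conv snd_conv)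

lemma aidx_less: "composition ns \<Longrightarrow> aidx ns i < length ns"
  using is_ak_pair_aidx_kidx unfolding is_ak_pair_def by blast

lemma index_of_aidx_kidx: "composition ns \<Longrightarrow> index_of ns (aidx ns i) (kidx ns i) = i"
  by (simp add: index_of_is_ak_pair is_ak_pair_aidx_kidx)

lemma aidx_kidx_index_of:
  "composition ns \<Longrightarrow> a < length ns \<Longrightarrow>
     aidx ns (index_of ns a k) = a \<and> kidx ns (index_of ns a k) = k"
  using ak_pair_eqI[OF is_ak_pair_index_of] by (simp add: aidx_def kidx_def)

lemma eidx_eq_index_of:
  "composition ns \<Longrightarrow> a < length ns \<Longrightarrow> eidx ns a k = index_of ns a k"
  unfolding eidx_def
  by (rule the_equality) (auto simp: aidx_kidx_index_of intro: index_of_aidx_kidx[symmetric])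

definition next_index :: "nat list \<Rightarrow> nat \<Rightarrow> nat" where
  "next_index ns i = index_of ns (aidx ns i) (Suc (kidx ns i))"

lemma aidx_kidx_next_index:
  "composition ns \<Longrightarrow>
     aidx ns (next_index ns i) = aidx ns i \<and> kidx ns (next_index ns i) = Suc (kidx ns i)"
  unfolding next_index_def by (simp add: aidx_kidx_index_of aidx_less)

lemma Lambda_eq:
  assumes "composition ns" "a < length ns"
  shows "Lambda ns a i j = (if a = aidx ns i \<and> j = next_index ns i then 1 else 0)"
proof -
  have "(\<exists>k. i = eidx ns a k \<and> j = eidx ns a (Suc k)) \<longleftrightarrow>
      a = aidx ns i \<and> j = next_index ns i"
    using assms
    by (auto simp: eidx_eq_index_of next_index_def aidx_kidx_index_of index_of_aidx_kidx
        intro!: exI[of _ "kidx ns i"])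
  then show ?thesis unfolding Lambda_def by simp
qed

lemma Upsilon_eq:
  assumes "composition ns"
  shows "Upsilon ns i j = (if j = next_index ns i then 1 else 0)"
proof -
  have "Upsilon ns i j =
      (\<Sum>a<length ns. if a = aidx ns i then (if j = next_index ns i then 1 else 0) else 0)"
    unfolding Upsilon_def using assms by (intro sum.cong) (auto simp: Lambda_eq)
  also have "\<dots> = (if j = next_index ns i then 1 else 0)" using aidx_less[OF assms] by simp
  finally show ?thesis .
qed

definition row_finite :: "(nat \<Rightarrow> nat \<Rightarrow> real) \<Rightarrow> bool" where
  "row_finite A \<longleftrightarrow> (\<forall>i. finite {j. A i j \<noteq> 0})"

definition col_finite :: "(nat \<Rightarrow> nat \<Rightarrow> real) \<Rightarrow> bool" where
  "col_finite A \<longleftrightarrow> (\<forall>j. finite {i. A i j \<noteq> 0})"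

lemma lower_triangular_row_finite:
  assumes "lower_triangular A"
  shows "row_finite A"
  unfolding row_finite_def
proof
  fix i
  have "{j. A i j \<noteq> 0} \<subseteq> {..i}"
    using assms unfolding lower_triangular_def by (auto intro: leI)
  then show "finite {j. A i j \<noteq> 0}" using finite_subset by blast
qed

lemma upper_triangular_col_finite:
  assumes "upper_triangular A"
  shows "col_finite A"
  unfolding col_finite_def
proof
  fix j
  have "{i. A i j \<noteq> 0} \<subseteq> {..j}"
    using assms unfolding upper_triangular_def by (auto intro: leI)
  then show "finite {i. A i j \<noteq> 0}" using finite_subset by blast
qed

lemma row_finite_Upsilon: "composition ns \<Longrightarrow> row_finite (Upsilon ns)"
  unfolding row_finite_def by (simp add: Upsilon_eq)

lemma col_finite_transpose_Upsilon: "composition ns \<Longrightarrow> col_finite (mtrans (Upsilon ns))"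
  unfolding col_finite_def mtrans_def by (simp add: Upsilon_eq)

lemma mmult_eq_sum:
  assumes "finite F" "\<And>k. k \<notin> F \<Longrightarrow> A i k * B k j = 0"
  shows "mmult A B i j = (\<Sum>k\<in>F. A i k * B k j)"
  unfolding mmult_def using assms by (subst infsum_cong_neutral[where T = F]) auto

lemma mmult_mid_left: "mmult mid A = A"
proof (intro ext)
  show "mmult mid A i j = A i j" for i j
    by (subst mmult_eq_sum[where F = "{i}"]) (auto simp: mid_def)
qed

lemma mmult_mid_right: "mmult A mid = A"
proof (intro ext)
  show "mmult A mid i j = A i j" for i j
    by (subst mmult_eq_sum[where F = "{j}"]) (auto simp: mid_def)
qed

lemma mmult_Upsilon_left: "composition ns \<Longrightarrow> mmult (Upsilon ns) A i j = A (next_index ns i) j"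
  by (subst mmult_eq_sum[where F = "{next_index ns i}"]) (auto simp: Upsilon_eq)

lemma mmult_transpose_Upsilon_right:
  "composition ns \<Longrightarrow> mmult A (mtrans (Upsilon ns)) i j = A i (next_index ns j)"
  by (subst mmult_eq_sum[where F = "{next_index ns j}"]) (auto simp: Upsilon_eq mtrans_def)

lemma row_finite_mmult:
  assumes "row_finite A" "row_finite B"
  shows "row_finite (mmult A B)"
  unfolding row_finite_def
proof
  fix i
  let ?F = "{k. A i k \<noteq> 0}"
  have "{j. mmult A B i j \<noteq> 0} \<subseteq> (\<Union>k\<in>?F. {j. B k j \<noteq> 0})"
  proof
    fix j assume "j \<in> {j. mmult A B i j \<noteq> 0}"
    moreover have "mmult A B i j = (\<Sum>k\<in>?F. A i k * B k j)"
      using assms by (intro mmult_eq_sum) (auto simp: row_finite_def)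
    ultimately obtain k where "k \<in> ?F" "A i k * B k j \<noteq> 0"
      by (auto elim: sum.not_neutral_contains_not_neutral)
    then show "j \<in> (\<Union>k\<in>?F. {j. B k j \<noteq> 0})" by auto
  qed
  moreover have "finite (\<Union>k\<in>?F. {j. B k j \<noteq> 0})" using assms unfolding row_finite_def by blast
  ultimately show "finite {j. mmult A B i j \<noteq> 0}" by (rule finite_subset)
qed

lemma mmult_assoc_entry:
  assumes "finite F" "finite G" "\<And>k. k \<notin> F \<Longrightarrow> A i k = 0"
    and "\<And>k l. k \<in> F \<Longrightarrow> l \<notin> G \<Longrightarrow> B k l * C l j = 0"
  shows "mmult (mmult A B) C i j = mmult A (mmult B C) i j"
proof -
  have AB: "mmult A B i l = (\<Sum>k\<in>F. A i k * B k l)" for l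
    using assms by (intro mmult_eq_sum) auto
  have BC: "mmult B C k j = (\<Sum>l\<in>G. B k l * C l j)" if "k \<in> F" for k
    using assms that by (intro mmult_eq_sum) auto
  have "mmult (mmult A B) C i j = (\<Sum>l\<in>G. mmult A B i l * C l j)"
    using assms
    by (intro mmult_eq_sum) (auto simp: AB sum_distrib_right mult.assoc intro!: sum.neutral)
  also have "\<dots> = (\<Sum>k\<in>F. \<Sum>l\<in>G. A i k * (B k l * C l j))"
    by (simp add: AB sum_distrib_right mult.assoc sum.swap[of _ G])
  also have "\<dots> = (\<Sum>k\<in>F. A i k * mmult B C k j)"
    by (simp add: BC sum_distrib_left)
  also have "\<dots> = mmult A (mmult B C) i j"
    using assms by (intro mmult_eq_sum[symmetric]) auto
  finally show ?thesis .
qed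

lemma mmult_assoc_row_finite:
  assumes "row_finite A" "row_finite B"
  shows "mmult (mmult A B) C = mmult A (mmult B C)"
proof (intro ext)
  fix i j
  let ?F = "{k. A i k \<noteq> 0}"
  show "mmult (mmult A B) C i j = mmult A (mmult B C) i j"
    using assms unfolding row_finite_def
    by (intro mmult_assoc_entry[where F = ?F and G = "\<Union>k\<in>?F. {l. B k l \<noteq> 0}"]) auto
qed

lemma mmult_assoc_col_finite:
  assumes "row_finite A" "col_finite C"
  shows "mmult (mmult A B) C = mmult A (mmult B C)"
proof (intro ext)
  fix i j
  show "mmult (mmult A B) C i j = mmult A (mmult B C) i j"
    using assms unfolding row_finite_def col_finite_def
    by (intro mmult_assoc_entry[where F = "{k. A i k \<noteq> 0}" and G = "{l. C l j \<noteq> 0}"]) auto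
qed

lemma moment_matrix_shift:
  assumes "composition n1" "composition n2"
  shows "mmult (Upsilon n1) (moment_matrix \<mu> w1 w2 n1 n2) =
         mmult (moment_matrix \<mu> w1 w2 n1 n2) (mtrans (Upsilon n2))"
  by (intro ext)
    (simp add: assms mmult_Upsilon_left mmult_transpose_Upsilon_right moment_matrix_def
      aidx_kidx_next_index)

lemma conjugate_intertwined_by_factorization:
  assumes "row_finite U" "col_finite V" "mmult U g = mmult g V" "g = mmult Sinv Sb"
    and "row_finite S" "row_finite Sinv" "mmult S Sinv = mid"
    and "col_finite Sbinv" "mmult Sb Sbinv = mid"
  shows "mmult (mmult S U) Sinv = mmult (mmult Sb V) Sbinv"
proof -
  let ?C = "mmult (mmult S U) Sinv"
  have SU: "row_finite (mmult S U)" using assms by (intro row_finite_mmult)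
  have "mmult ?C Sb = mmult (mmult S U) g"
    using mmult_assoc_row_finite[OF SU assms(6)] assms(4) by simp
  also have "\<dots> = mmult S (mmult g V)"
    using mmult_assoc_row_finite[OF assms(5,1)] assms(3) by simp
  also have "\<dots> = mmult S (mmult Sinv (mmult Sb V))"
    using mmult_assoc_col_finite[OF assms(6,2)] assms(4) by simp
  also have "\<dots> = mmult Sb V"
    using mmult_assoc_row_finite[OF assms(5,6)] assms(7) by (simp add: mmult_mid_left)
  finally have CSb: "mmult ?C Sb = mmult Sb V" .
  have "?C = mmult ?C (mmult Sb Sbinv)" using assms(9) by (simp add: mmult_mid_right)
  also have "\<dots> = mmult (mmult Sb V) Sbinv"
    using mmult_assoc_col_finite[OF row_finite_mmult[OF SU assms(6)] assms(8), of Sb] CSb by simp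
  finally show ?thesis .
qed

theorem proposition2p13:
  fixes \<mu> :: "real measure" and I :: "real set"
    and w1 w2 :: "nat \<Rightarrow> real \<Rightarrow> real" and n1 n2 :: "nat list"
    and S Sinv Sb Sbinv :: "nat \<Rightarrow> nat \<Rightarrow> real"
  assumes "composition n1" and "composition n2"
    and "is_interval I"
    and "finite_measure \<mu>" and "sets \<mu> = sets (restrict_space borel I)"
    and "\<forall>a<length n1. w1 a \<in> borel_measurable \<mu>"
    and "\<forall>b<length n2. w2 b \<in> borel_measurable \<mu>"
    and "\<forall>a<length n1. \<forall>b<length n2. \<forall>m::nat.
           integrable \<mu> (\<lambda>x. x ^ m * w1 a x * w2 b x)"
    and "lower_triangular S" and "\<forall>i. S i i = 1"
    and "lower_triangular Sinv" and "mmult S Sinv = mid" and "mmult Sinv S = mid"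
    and "upper_triangular Sb" and "\<forall>i. Sb i i \<noteq> 0"
    and "upper_triangular Sbinv" and "mmult Sb Sbinv = mid" and "mmult Sbinv Sb = mid"
    and "moment_matrix \<mu> w1 w2 n1 n2 = mmult Sinv Sb"
  shows "mmult (mmult S (Upsilon n1)) Sinv = mmult (mmult Sb (mtrans (Upsilon n2))) Sbinv"
  using assms
  by (intro conjugate_intertwined_by_factorization[where g = "moment_matrix \<mu> w1 w2 n1 n2"]
      row_finite_Upsilon col_finite_transpose_Upsilon moment_matrix_shift
      lower_triangular_row_finite upper_triangular_col_finite) simp_all

end
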